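(* Consider the $k$-means++ seeding algorithm on a finite set $\mathbf{X}\subset\mathbb{R}^d$ with a fixed optimal $k$-clustering. Fix $\kappa\in\{1,\dots,k\}$. Let $\tau=\min\{t\in\{1,\dots,k\}:K(C_t)\le\kappa\}$ if $K(C_k)\le\kappa$, and $\tau=k$ otherwise. Define $\Psi_t=M(C_t)\,U(\mathbf{X},C_t)/K(C_t)$ if $K(C_t)>0$ and $\Psi_t=0$ if $K(C_t)=0$. Then $$\mathbb{E}[\Psi_\tau]\le5\Big(1+\ln\frac{k}{\kappa+1}\Big)\mathrm{OPT}_k(\mathbf{X}).$$
   Context: For a finite $C\subset\mathbb{R}^d$, $\mathrm{cost}(x,C)=\min_{c\in C}\|x-c\|^2$, $\mathrm{cost}(\mathbf{Y},C)=\sum_{x\in\mathbf{Y}}\mathrm{cost}(x,C)$, $\mathrm{OPT}_i(\mathbf{Y})=\min_{|C|=i}\mathrm{cost}(\mathbf{Y},C)$. $k$-means++ seeding: $c_1$ uniform from $\mathbf{X}$, $C_1=\{c_1\}$; $C_{t+1}=C_t\cup\{x\}$ with $x$ chosen with probability $\mathrm{cost}(x,C_t)/\mathrm{cost}(\mathbf{X},C_t)$; centers are ordered by the time they are chosen. $P_1,\dots,P_k$ is a fixed optimal $k$-means clustering of $\mathbf{X}$. $P_i$ is covered by $C$ if $C\cap P_i\ne\varnothing$. $U(\mathbf{X},C)=\sum_i U(P_i,C)$ where $U(P_i,C)=\mathrm{cost}(P_i,C)$ if $P_i$ is not covered by $C$ and $0$ otherwise. A center $c\in C$ is a miss if an earlier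 center of $C$ lies in the same cluster as $c$; $M(C)$ is the number of misses; $K(C)$ is the number of clusters $P_i$ not covered by $C$. *)

theory Defs
  imports "HOL-Analysis.Analysis"
begin

definition cost_pt :: "'a::euclidean_space \<Rightarrow> 'a set \<Rightarrow> real" where
  "cost_pt x C = Min ((\<lambda>c. (norm (x - c))\<^sup>2) ` C)"

definition cost :: "'a::euclidean_space set \<Rightarrow> 'a set \<Rightarrow> real" where
  "cost Y C = (\<Sum>x\<in>Y. cost_pt x C)"

definition OPT :: "nat \<Rightarrow> 'a::euclidean_space set \<Rightarrow> real" where
  "OPT i Y = Inf {cost Y C | C. finite C \<and> card C = i}"

definition optimal_clustering :: "nat \<Rightarrow> 'a::euclidean_space set \<Rightarrow> (nat \<Rightarrow> 'a set) \<Rightarrow> bool" where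
  "optimal_clustering k X P \<longleftrightarrow>
     (\<forall>i<k. P i \<noteq> {}) \<and> (\<forall>i<k. \<forall>j<k. i \<noteq> j \<longrightarrow> P i \<inter> P j = {}) \<and>
     (\<Union>i<k. P i) = X \<and> (\<Sum>i<k. OPT 1 (P i)) = OPT k X"

text \<open>Probability that k-means++ seeding on X produces the ordered center sequence cs
  (first center uniform, each next one by D^2 sampling).\<close>
definition kpp_prob :: "'a::euclidean_space set \<Rightarrow> 'a list \<Rightarrow> real" where
  "kpp_prob X cs = (1 / real (card X)) *
     (\<Prod>t\<in>{1..<length cs}. cost_pt (cs ! t) (set (take t cs)) / cost X (set (take t cs)))"

definition covered :: "'a set \<Rightarrow> 'a set \<Rightarrow> bool" where
  "covered Q C \<longleftrightarrow> C \<inter> Q \<noteq> {}"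

definition U :: "nat \<Rightarrow> (nat \<Rightarrow> 'a::euclidean_space set) \<Rightarrow> 'a set \<Rightarrow> real" where
  "U k P C = (\<Sum>i<k. if covered (P i) C then 0 else cost (P i) C)"

definition Kunc :: "nat \<Rightarrow> (nat \<Rightarrow> 'a set) \<Rightarrow> 'a set \<Rightarrow> nat" where
  "Kunc k P C = card {i. i < k \<and> \<not> covered (P i) C}"

definition misses :: "nat \<Rightarrow> (nat \<Rightarrow> 'a set) \<Rightarrow> 'a list \<Rightarrow> nat" where
  "misses k P cs = card {j. j < length cs \<and>
     (\<exists>i<j. \<exists>l<k. cs ! i \<in> P l \<and> cs ! j \<in> P l)}"

definition tau :: "nat \<Rightarrow> (nat \<Rightarrow> 'a set) \<Rightarrow> nat \<Rightarrow> 'a list \<Rightarrow> nat" where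
  "tau k P \<kappa> cs = (if Kunc k P (set (take k cs)) \<le> \<kappa>
      then (LEAST t. 1 \<le> t \<and> t \<le> k \<and> Kunc k P (set (take t cs)) \<le> \<kappa>) else k)"

definition Psi :: "nat \<Rightarrow> 'a::euclidean_space set \<Rightarrow> (nat \<Rightarrow> 'a set) \<Rightarrow> 'a list \<Rightarrow> nat \<Rightarrow> real" where
  "Psi k X P cs t = (let C = set (take t cs) in
     if Kunc k P C > 0 then real (misses k P (take t cs)) * U k P C / real (Kunc k P C) else 0)"

end

theory Submission
  imports Defs
begin

text \<open>
  Call a cluster covered once it contains a center, and let \<open>H\<close> be the cost of the covered
  clusters, so that \<open>cost(X, C) = H + U\<close>. When the next center is drawn by \<open>D\<^sup>2\<close> sampling,
  the potential \<open>\<Psi> = M U / K\<close> grows in expectation by at most \<open>H / K\<close>: a center landing in a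
  covered cluster adds a miss but leaves \<open>U\<close> and \<open>K\<close> unchanged, while a center landing in an
  uncovered cluster \<open>P\<^sub>i\<close> removes \<open>cost(P\<^sub>i)\<close> from \<open>U\<close> and one cluster from \<open>K\<close>, and by
  Cauchy-Schwarz over the uncovered clusters the two effects balance.
  Before the stopping time at least \<open>max (k - t) (\<kappa> + 1)\<close> clusters are uncovered, so summing
  the increments over \<open>t < k\<close> produces the capped harmonic sum
  \<open>\<Sum>\<^sub>j 1 / max j (\<kappa> + 1) \<le> 1 + ln (k / (\<kappa> + 1))\<close>.
  Finally \<open>E[H] \<le> 5 OPT\<^sub>k\<close> at every time: the cost of a covered cluster only decreases, and
  the first center that \<open>D\<^sup>2\<close> sampling places into a cluster leaves it with expected cost at
  most five times its 1-means cost.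
\<close>

text \<open>
  Where the constant 5 comes from: rescale so that the squared distances \<open>e\<^sup>2\<close> of the points of a
  cluster to the current centers average to 1. A point at distance \<open>a\<close> from the centroid, which
  is itself at distance \<open>p\<close> from the centers, has \<open>|e - p| \<le> a\<close> and hence
  \<open>e\<^sup>2 min a\<^sup>2 1 \<le> 4 a\<^sup>2 + multiplier p * (e\<^sup>2 - 1)\<close>; the multiplier term vanishes after
  summation over the cluster.
\<close>

definition multiplier :: "real \<Rightarrow> real" where
  "multiplier p = (if p \<le> 1 then 0 else if 3/2 \<le> p then 1 else 2 * (p - 1))"

lemma middle_case_at_max:
  fixes h a :: real
  assumes "0 < h" "h < 1/2" "0 \<le> a" "a < 1"
  shows "(1 + h + a)^2 * a^2 \<le> 4 * a^2 + 2 * h * ((1 + h + a)^2 - 1)"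
proof -
  define u where "u = 1 + h + a"
  have eq: "4 * a^2 + 2 * h * (u^2 - 1) - u^2 * a^2
      = a^2 * ((2 - u) * (2 + u)) + 2 * h * ((u - 1) * (u + 1))"
    by (simp add: algebra_simps power2_eq_square)
  have "0 \<le> a^2 * ((2 - u) * (2 + u)) + 2 * h * ((u - 1) * (u + 1))"
  proof (cases "u \<le> 2")
    case True
    then show ?thesis
      using assms unfolding u_def by (intro add_nonneg_nonneg mult_nonneg_nonneg) auto
  next
    case False
    have "a^2 \<le> 1" using assms by (simp add: power_le_one)
    then have "a^2 * ((u - 2) * (u + 2)) \<le> (u - 2) * (u + 2)"
      using False by (intro mult_left_le_one_le) auto
    also have "\<dots> \<le> h * (u + 2)" using assms u_def by (intro mult_right_mono) auto
    also have "\<dots> \<le> h * (2 * ((u - 1) * (u + 1)))"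
    proof -
      have "u * 2 \<le> u * u" using False by (intro mult_left_mono) auto
      moreover have "2 * ((u - 1) * (u + 1)) = 2 * (u * u) - 2" by (simp add: algebra_simps)
      ultimately have "u + 2 \<le> 2 * ((u - 1) * (u + 1))" using False by linarith
      then show ?thesis using assms by (intro mult_left_mono) auto
    qed
    finally show ?thesis by (simp add: algebra_simps)
  qed
  then show ?thesis using eq unfolding u_def by simp
qed

lemma middle_case_at_min:
  fixes h a :: real
  assumes "0 < h" "h < 1/2" "0 \<le> a" "a < 1"
  shows "(1 + h - a)^2 * a^2 \<le> 4 * a^2 + 2 * h * ((1 + h - a)^2 - 1)"
proof -
  define v where "v = 1 + h - a"
  have eq: "4 * a^2 + 2 * h * (v^2 - 1) - v^2 * a^2 = a^2 * (4 - v * v) + 2 * h * (v * v - 1)"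
    by (simp add: algebra_simps power2_eq_square)
  have v: "0 < v" "v < 2" using assms v_def by auto
  have "v * v < 2 * 2" using v by (intro mult_strict_mono) auto
  then have vv: "v * v < 4" by simp
  have "0 \<le> a^2 * (4 - v * v) + 2 * h * (v * v - 1)"
  proof (cases "1 \<le> v")
    case True
    then have "1 * 1 \<le> v * v" by (intro mult_mono) auto
    then show ?thesis using vv assms by (intro add_nonneg_nonneg mult_nonneg_nonneg) auto
  next
    case False
    have "v * v \<le> 1 * 1" using False v by (intro mult_mono) auto
    then have vv3: "3 \<le> 4 - v * v" by simp
    have "1 - v * v = (a - h) * (1 + v)" by (simp add: v_def algebra_simps)
    also have "\<dots> \<le> (a - h) * 2" using False v_def assms by (intro mult_left_mono) auto
    finally have "2 * h * (1 - v * v) \<le> 2 * h * ((a - h) * 2)"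
      using assms by (intro mult_left_mono) auto
    also have "\<dots> \<le> a^2 * 3"
    proof -
      have "0 \<le> (3 * a - 2 * h)^2 + 8 * (h * h)" by simp
      then show ?thesis by (simp add: algebra_simps power2_eq_square)
    qed
    also have "\<dots> \<le> a^2 * (4 - v * v)" using vv3 by (intro mult_left_mono) auto
    finally show ?thesis by (simp add: algebra_simps)
  qed
  then show ?thesis using eq unfolding v_def by (simp add: power2_eq_square)
qed

lemma middle_case_large_offset:
  fixes h a :: real
  assumes "0 < h" "h < 1/2" "1 \<le> a"
  shows "(1 + h + a)^2 * (1 - 2 * h) \<le> 4 * a^2 - 2 * h"
proof -
  define y where "y = (1 - 2 * h) * (3 + 2 * h + a)"
  have eq: "4 * a^2 - 2 * h - (1 + h + a)^2 * (1 - 2 * h)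
      = h * (2 * h * h + 7 * h + 2) + (a - 1) * (4 * (a + 1) - y)"
    by (simp add: y_def algebra_simps power2_eq_square)
  have "y \<le> 1 * (3 + 2 * h + a)" unfolding y_def using assms by (intro mult_right_mono) auto
  then have "0 \<le> (a - 1) * (4 * (a + 1) - y)" using assms by (intro mult_nonneg_nonneg) auto
  moreover have "0 \<le> h * (2 * h * h + 7 * h + 2)"
    using assms by (intro mult_nonneg_nonneg add_nonneg_nonneg) auto
  ultimately show ?thesis using eq by linarith
qed

lemma sq_min_le_multiplier_small:
  fixes p a e :: real
  assumes "p \<le> 1" "0 \<le> a" "0 \<le> e" "e \<le> p + a"
  shows "e^2 * min (a^2) 1 \<le> 4 * a^2"
proof -
  have e1: "e^2 \<le> (1 + a)^2" using assms by (intro power_mono) auto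
  show ?thesis
  proof (cases "a \<le> 1")
    case True
    then have "(1 + a)^2 \<le> 2^2" using assms by (intro power_mono) auto
    then have "e^2 * a^2 \<le> 2^2 * a^2" using e1 by (intro mult_right_mono) auto
    then show ?thesis using True assms by (simp add: power_le_one min_def)
  next
    case False
    then have "1 \<le> a^2" by (simp add: one_le_power)
    moreover have "(1 + a)^2 \<le> (2 * a)^2" using False by (intro power_mono) auto
    ultimately show ?thesis using e1 by (simp add: power_mult_distrib)
  qed
qed

lemma sq_min_le_multiplier_large:
  fixes p a e :: real
  assumes "3/2 \<le> p" "0 \<le> a" "p \<le> e + a"
  shows "e^2 * min (a^2) 1 \<le> 4 * a^2 + (e^2 - 1)"
proof (cases "a < 1/2")
  case True
  then have "1 \<le> e" using assms by simp
  then have e1: "1 \<le> e^2" by (simp add: one_le_power)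
  have "a * a \<le> (1/2) * (1/2)" using True assms by (intro mult_mono) auto
  then have "1 * (1 - a^2) \<le> e^2 * (1 - a^2)" using e1 by (intro mult_right_mono) (auto simp: power2_eq_square)
  then have "1 - a^2 \<le> e^2 - e^2 * a^2" by (simp add: algebra_simps)
  then have "e^2 * a^2 \<le> 4 * a^2 + (e^2 - 1)" using zero_le_power2[of a] by linarith
  moreover have "min (a^2) 1 = a^2" using True assms by (simp add: power_le_one)
  ultimately show ?thesis by simp
next
  case False
  have "(1/2) * (1/2) \<le> a * a" using False by (intro mult_mono) auto
  then have "1 \<le> 4 * a^2" by (simp add: power2_eq_square)
  moreover have "e^2 * min (a^2) 1 \<le> e^2 * 1" by (intro mult_left_mono) auto
  ultimately show ?thesis by simp
qed

lemma sq_min_le_multiplier_middle: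
  fixes h a e :: real
  assumes h: "0 < h" "h < 1/2" and "0 \<le> a" "0 \<le> e" "e \<le> 1 + h + a" "1 + h \<le> e + a"
  shows "e^2 * min (a^2) 1 \<le> 4 * a^2 + 2 * h * (e^2 - 1)"
proof (cases "a < 1")
  case True
  then have min: "min (a^2) 1 = a^2" using assms by (simp add: power_le_one)
  show ?thesis
  proof (cases "2 * h \<le> a^2")
    case True
    have "e^2 \<le> (1 + h + a)^2" using assms by (intro power_mono) auto
    then have "e^2 * (a^2 - 2 * h) \<le> (1 + h + a)^2 * (a^2 - 2 * h)"
      using True by (intro mult_right_mono) auto
    then show ?thesis using middle_case_at_max[OF h \<open>0 \<le> a\<close> \<open>a < 1\<close>] min
      by (simp add: algebra_simps)
  next
    case False
    have "(1 + h - a)^2 \<le> e^2" using assms True by (intro power_mono) auto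
    then have "(1 + h - a)^2 * (2 * h - a^2) \<le> e^2 * (2 * h - a^2)"
      using False by (intro mult_right_mono) auto
    then show ?thesis using middle_case_at_min[OF h \<open>0 \<le> a\<close> \<open>a < 1\<close>] min
      by (simp add: algebra_simps)
  qed
next
  case False
  then have a: "1 \<le> a" by simp
  have "e^2 \<le> (1 + h + a)^2" using assms by (intro power_mono) auto
  then have "e^2 * (1 - 2 * h) \<le> (1 + h + a)^2 * (1 - 2 * h)" using h by (intro mult_right_mono) auto
  moreover have "min (a^2) 1 = 1" using a by (simp add: one_le_power)
  ultimately show ?thesis using middle_case_large_offset[OF h a] by (simp add: algebra_simps)
qed

lemma sq_min_le_multiplier:
  fixes p a e :: real
  assumes "0 \<le> a" "0 \<le> e" "e \<le> p + a" "p \<le> e + a"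
  shows "e^2 * min (a^2) 1 \<le> 4 * a^2 + multiplier p * (e^2 - 1)"
proof -
  consider "p \<le> 1" | "3/2 \<le> p" | "1 < p" "p < 3/2" by linarith
  then show ?thesis
  proof cases
    case 1
    then show ?thesis using sq_min_le_multiplier_small[OF 1 assms(1-3)] by (simp add: multiplier_def)
  next
    case 2
    then show ?thesis using sq_min_le_multiplier_large[OF 2 assms(1,4)] by (simp add: multiplier_def)
  next
    case 3
    then show ?thesis using sq_min_le_multiplier_middle[of "p - 1" a e] assms
      by (simp add: multiplier_def)
  qed
qed

lemma sq_min_le_multiplier_scaled:
  fixes q p s d :: real
  assumes q: "0 < q" and "0 \<le> s" "0 \<le> d" "d \<le> p + s" "p \<le> d + s"
  shows "d^2 * min (s^2) (q^2) \<le> 4 * s^2 * q^2 + multiplier (p / q) * q^2 * (d^2 - q^2)"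
proof -
  have h: "(d/q)^2 * min ((s/q)^2) 1 \<le> 4 * (s/q)^2 + multiplier (p/q) * ((d/q)^2 - 1)"
    using assms by (intro sq_min_le_multiplier) (auto simp: divide_simps)
  have m: "min ((s/q)^2) 1 = min (s^2) (q^2) / q^2"
    using q by (auto simp: power_divide min_def field_simps)
  have "d^2 * min (s^2) (q^2) = ((d/q)^2 * min ((s/q)^2) 1) * (q^2 * q^2)"
    unfolding m using q by (simp add: power_divide field_simps)
  also have "\<dots> \<le> (4 * (s/q)^2 + multiplier (p/q) * ((d/q)^2 - 1)) * (q^2 * q^2)"
    using h q by (intro mult_right_mono) auto
  also have "\<dots> = 4 * s^2 * q^2 + multiplier (p/q) * q^2 * (d^2 - q^2)"
    using q by (simp add: power_divide field_simps)
  finally show ?thesis .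
qed

lemma sum_sq_min_le:
  fixes d s :: "'b \<Rightarrow> real" and q p :: real
  assumes "0 < q"
    and "\<And>c. c \<in> A \<Longrightarrow> 0 \<le> s c \<and> 0 \<le> d c \<and> d c \<le> p + s c \<and> p \<le> d c + s c"
    and "(\<Sum>c\<in>A. (d c)^2) = real (card A) * q^2"
  shows "(\<Sum>c\<in>A. (d c)^2 * min ((s c)^2) (q^2)) \<le> 4 * q^2 * (\<Sum>c\<in>A. (s c)^2)"
proof -
  define m where "m = multiplier (p / q) * q^2"
  have "(\<Sum>c\<in>A. (d c)^2 * min ((s c)^2) (q^2)) \<le> (\<Sum>c\<in>A. 4 * (s c)^2 * q^2 + m * ((d c)^2 - q^2))"
    unfolding m_def using assms by (intro sum_mono sq_min_le_multiplier_scaled) auto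
  also have "\<dots> = 4 * q^2 * (\<Sum>c\<in>A. (s c)^2) + m * ((\<Sum>c\<in>A. (d c)^2) - real (card A) * q^2)"
    by (simp add: sum.distrib sum_distrib_left sum_distrib_right sum_subtractf right_diff_distrib
        mult.commute mult.left_commute)
  also have "\<dots> = 4 * q^2 * (\<Sum>c\<in>A. (s c)^2)" using assms by simp
  finally show ?thesis .
qed

section \<open>Centroids and the cost of one sampled center\<close>

definition centroid :: "'a::euclidean_space set \<Rightarrow> 'a" where
  "centroid A = (1 / real (card A)) *\<^sub>R (\<Sum>a\<in>A. a)"

definition centroid_cost :: "'a::euclidean_space set \<Rightarrow> real" where
  "centroid_cost A = (\<Sum>a\<in>A. (norm (a - centroid A))^2)"

lemma centroid_cost_nonneg: "0 \<le> centroid_cost A"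
  unfolding centroid_cost_def by (intro sum_nonneg) auto

lemma sum_diff_centroid:
  assumes "finite A" "A \<noteq> {}"
  shows "(\<Sum>a\<in>A. a - centroid A) = 0"
  using assms by (simp add: sum_subtractf centroid_def sum_constant_scaleR scaleR_scaleR card_gt_0_iff)

lemma sum_sq_dist_centroid:
  fixes A :: "'a::euclidean_space set"
  assumes "finite A" "A \<noteq> {}"
  shows "(\<Sum>a\<in>A. (norm (a - z))^2) = centroid_cost A + real (card A) * (norm (z - centroid A))^2"
proof -
  define m where "m = centroid A"
  have sq: "(norm (a - z))^2 = (norm (a - m))^2 + 2 * inner (a - m) (m - z) + (norm (z - m))^2" for a
    using dot_norm[of "a - m" "m - z"] by (simp add: norm_minus_commute)
  have "(\<Sum>a\<in>A. inner (a - m) (m - z)) = inner (\<Sum>a\<in>A. a - m) (m - z)"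
    by (simp add: inner_sum_left)
  also have "\<dots> = 0" using sum_diff_centroid[OF assms] by (simp add: m_def)
  finally have "(\<Sum>a\<in>A. inner (a - m) (m - z)) = 0" .
  then show ?thesis
    by (simp add: sq sum.distrib centroid_cost_def m_def flip: sum_distrib_left)
qed

lemma centroid_cost_le_OPT1:
  assumes "finite A" "A \<noteq> {}"
  shows "centroid_cost A \<le> OPT 1 A"
  unfolding OPT_def
proof (rule cInf_greatest)
  have "cost A {0} \<in> {cost A C |C. finite C \<and> card C = 1}"
    by (intro CollectI exI[of _ "{0}"]) simp
  then show "{cost A C |C. finite C \<and> card C = 1} \<noteq> {}" by blast
next
  fix v assume "v \<in> {cost A C |C. finite C \<and> card C = 1}"
  then obtain C where "v = cost A C" "card C = 1" by blast
  then obtain z where "v = cost A {z}" by (auto simp: card_Suc_eq)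
  also have "\<dots> = centroid_cost A + real (card A) * (norm (z - centroid A))^2"
    using sum_sq_dist_centroid[OF assms] by (simp add: cost_def cost_pt_def)
  finally show "centroid_cost A \<le> v" by simp
qed

lemma cost_pt_le: "finite C \<Longrightarrow> c \<in> C \<Longrightarrow> cost_pt x C \<le> (norm (x - c))^2"
  unfolding cost_pt_def by (intro Min_le) auto

lemma cost_pt_attained: "finite C \<Longrightarrow> C \<noteq> {} \<Longrightarrow> \<exists>c\<in>C. cost_pt x C = (norm (x - c))^2"
  unfolding cost_pt_def by (metis (no_types, lifting) Min_in finite_imageI image_iff image_is_empty)

lemma cost_pt_nonneg: "finite C \<Longrightarrow> C \<noteq> {} \<Longrightarrow> 0 \<le> cost_pt x C"
  using cost_pt_attained[of C x] by auto

lemma cost_pt_insert: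
  "finite C \<Longrightarrow> C \<noteq> {} \<Longrightarrow> cost_pt x (insert c C) = min ((norm (x - c))^2) (cost_pt x C)"
  unfolding cost_pt_def by (simp add: Min_insert)

lemma cost_pt_antimono: "finite C' \<Longrightarrow> C \<noteq> {} \<Longrightarrow> C \<subseteq> C' \<Longrightarrow> cost_pt x C' \<le> cost_pt x C"
  unfolding cost_pt_def by (intro Min_antimono) auto

lemma cost_nonneg: "finite C \<Longrightarrow> C \<noteq> {} \<Longrightarrow> 0 \<le> cost Y C"
  unfolding cost_def by (intro sum_nonneg cost_pt_nonneg)

lemma cost_antimono: "finite C' \<Longrightarrow> C \<noteq> {} \<Longrightarrow> C \<subseteq> C' \<Longrightarrow> cost Y C' \<le> cost Y C"
  unfolding cost_def by (intro sum_mono cost_pt_antimono)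

lemma sqrt_cost_pt_lipschitz:
  assumes "finite C" "C \<noteq> {}"
  shows "sqrt (cost_pt x C) \<le> sqrt (cost_pt y C) + norm (x - y)"
proof -
  obtain c where c: "c \<in> C" "cost_pt y C = (norm (y - c))^2"
    using cost_pt_attained[OF assms] by blast
  have "sqrt (cost_pt x C) \<le> norm (x - c)"
    using real_sqrt_le_mono[OF cost_pt_le[OF assms(1) c(1)]] by simp
  also have "\<dots> \<le> norm (x - y) + norm (y - c)" using norm_triangle_ineq[of "x - y" "y - c"] by simp
  finally show ?thesis using c by simp
qed

lemma cost_insert_le:
  fixes A C :: "'a::euclidean_space set"
  assumes A: "finite A" "A \<noteq> {}" and C: "finite C" "C \<noteq> {}"
  shows "cost A (insert c C)
    \<le> centroid_cost A + min (real (card A) * (norm (c - centroid A))^2) (cost A C)"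
proof -
  have "cost A (insert c C) = (\<Sum>x\<in>A. min ((norm (x - c))^2) (cost_pt x C))"
    unfolding cost_def using C by (simp add: cost_pt_insert)
  also have "\<dots> \<le> min (\<Sum>x\<in>A. (norm (x - c))^2) (\<Sum>x\<in>A. cost_pt x C)"
    by (intro min.boundedI sum_mono) auto
  also have "\<dots> = min (centroid_cost A + real (card A) * (norm (c - centroid A))^2) (cost A C)"
    using sum_sq_dist_centroid[OF A] by (simp add: cost_def)
  also have "\<dots> \<le> centroid_cost A + min (real (card A) * (norm (c - centroid A))^2) (cost A C)"
    using centroid_cost_nonneg[of A] by (simp add: min_def)
  finally show ?thesis .
qed

lemma sum_cost_pt_mul_min_le:
  fixes A C :: "'a::euclidean_space set"
  assumes A: "finite A" "A \<noteq> {}" and C: "finite C" "C \<noteq> {}"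
  shows "(\<Sum>c\<in>A. cost_pt c C * min (real (card A) * (norm (c - centroid A))^2) (cost A C))
    \<le> 4 * centroid_cost A * cost A C"
proof (cases "cost A C = 0")
  case True
  have "cost_pt c C * min (real (card A) * (norm (c - centroid A))^2) (cost A C) \<le> 0" for c
    using True cost_pt_nonneg[OF C, of c] by (simp add: mult_nonneg_nonpos)
  then show ?thesis using True by (simp add: sum_nonpos)
next
  case False
  define S n m where "S = cost A C" and "n = real (card A)" and "m = centroid A"
  have n: "0 < n" using A by (simp add: n_def card_gt_0_iff)
  have D: "0 \<le> cost_pt x C" for x using C by (rule cost_pt_nonneg)
  have S: "0 < S" using False cost_nonneg[OF C, of A] by (simp add: S_def)
  define q where "q = sqrt (S / n)"
  have q: "0 < q" "q^2 = S / n" using S n by (simp_all add: q_def)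
  have "(\<Sum>c\<in>A. (sqrt (cost_pt c C))^2 * min ((norm (c - m))^2) (q^2))
      \<le> 4 * q^2 * (\<Sum>c\<in>A. (norm (c - m))^2)"
  proof (rule sum_sq_min_le[OF q(1), where p = "sqrt (cost_pt m C)"])
    show "(\<Sum>c\<in>A. (sqrt (cost_pt c C))^2) = real (card A) * q^2"
      using q n D by (simp add: S_def cost_def n_def)
  next
    fix c assume "c \<in> A"
    show "0 \<le> norm (c - m) \<and> 0 \<le> sqrt (cost_pt c C) \<and>
        sqrt (cost_pt c C) \<le> sqrt (cost_pt m C) + norm (c - m) \<and>
        sqrt (cost_pt m C) \<le> sqrt (cost_pt c C) + norm (c - m)"
      using sqrt_cost_pt_lipschitz[OF C, of c m] sqrt_cost_pt_lipschitz[OF C, of m c] D[of c]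
      by (simp add: norm_minus_commute)
  qed
  moreover have "cost_pt c C * min (n * (norm (c - m))^2) S
      = n * ((sqrt (cost_pt c C))^2 * min ((norm (c - m))^2) (q^2))" for c
    using q n D[of c] by (simp add: min_mult_distrib_left mult.left_commute)
  ultimately have "(\<Sum>c\<in>A. cost_pt c C * min (n * (norm (c - m))^2) S)
      \<le> n * (4 * q^2 * (\<Sum>c\<in>A. (norm (c - m))^2))"
    using n by (simp add: sum_distrib_left[symmetric])
  also have "\<dots> = 4 * centroid_cost A * S" using q n by (simp add: centroid_cost_def m_def)
  finally show ?thesis by (simp add: S_def n_def m_def)
qed

lemma sum_cost_pt_mul_cost_insert_le:
  fixes A C :: "'a::euclidean_space set"
  assumes A: "finite A" "A \<noteq> {}" and C: "finite C" "C \<noteq> {}"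
  shows "(\<Sum>c\<in>A. cost_pt c C * cost A (insert c C)) \<le> 5 * centroid_cost A * cost A C"
proof -
  define R where "R = centroid_cost A"
  define g where "g c = min (real (card A) * (norm (c - centroid A))^2) (cost A C)" for c
  have "(\<Sum>c\<in>A. cost_pt c C * cost A (insert c C)) \<le> (\<Sum>c\<in>A. cost_pt c C * (R + g c))"
    using cost_insert_le[OF A C] cost_pt_nonneg[OF C]
    by (intro sum_mono mult_left_mono) (auto simp: R_def g_def)
  also have "\<dots> = cost A C * R + (\<Sum>c\<in>A. cost_pt c C * g c)"
    by (simp add: distrib_left sum.distrib sum_distrib_right cost_def)
  also have "\<dots> \<le> cost A C * R + 4 * R * cost A C"
    using sum_cost_pt_mul_min_le[OF A C] by (simp add: R_def g_def)
  finally show ?thesis by (simp add: R_def algebra_simps)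
qed

section \<open>Expectations under k-means++ seeding\<close>

definition center_seqs :: "'a set \<Rightarrow> nat \<Rightarrow> 'a list set" where
  "center_seqs X t = {cs. set cs \<subseteq> X \<and> length cs = t}"

definition d2_prob :: "'a::euclidean_space set \<Rightarrow> 'a list \<Rightarrow> 'a \<Rightarrow> real" where
  "d2_prob X cs x = cost_pt x (set cs) / cost X (set cs)"

definition kpp_expect :: "'a::euclidean_space set \<Rightarrow> nat \<Rightarrow> ('a list \<Rightarrow> real) \<Rightarrow> real" where
  "kpp_expect X t f = (\<Sum>cs\<in>center_seqs X t. kpp_prob X cs * f cs)"

lemma set_take_nonempty: "1 \<le> j \<Longrightarrow> j \<le> length cs \<Longrightarrow> set (take j cs) \<noteq> {}"
  by (cases cs) auto

lemma kpp_prob_nonneg: "0 \<le> kpp_prob X cs"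
proof -
  have "0 \<le> (\<Prod>j\<in>{1..<length cs}. cost_pt (cs ! j) (set (take j cs)) / cost X (set (take j cs)))"
  proof (intro prod_nonneg divide_nonneg_nonneg)
    fix j assume "j \<in> {1..<length cs}"
    then have "set (take j cs) \<noteq> {}" by (intro set_take_nonempty) auto
    then show "0 \<le> cost_pt (cs ! j) (set (take j cs))" "0 \<le> cost X (set (take j cs))"
      by (auto intro: cost_pt_nonneg cost_nonneg)
  qed
  then show ?thesis unfolding kpp_prob_def by simp
qed

lemma kpp_prob_snoc:
  assumes "1 \<le> length cs"
  shows "kpp_prob X (cs @ [x]) = kpp_prob X cs * d2_prob X cs x"
proof -
  define t where "t = length cs"
  define step where "step ys j = cost_pt (ys ! j) (set (take j ys)) / cost X (set (take j ys))"
    for ys :: "'a list" and j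
  have "(\<Prod>j\<in>{1..<t}. step (cs @ [x]) j) = (\<Prod>j\<in>{1..<t}. step cs j)"
    by (intro prod.cong) (auto simp: step_def nth_append t_def)
  moreover have "step (cs @ [x]) t = d2_prob X cs x" by (simp add: step_def d2_prob_def t_def)
  moreover have "(\<Prod>j\<in>{1..<Suc t}. step (cs @ [x]) j)
      = (\<Prod>j\<in>{1..<t}. step (cs @ [x]) j) * step (cs @ [x]) t"
    using assms unfolding t_def by (rule prod.atLeastLessThan_Suc)
  ultimately show ?thesis by (simp add: kpp_prob_def step_def t_def)
qed

lemma sum_d2_prob_le_1: "(\<Sum>x\<in>X. d2_prob X cs x) \<le> 1"
proof -
  have "(\<Sum>x\<in>X. d2_prob X cs x) = cost X (set cs) / cost X (set cs)"
    unfolding d2_prob_def cost_def by (simp add: sum_divide_distrib[symmetric])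
  then show ?thesis by (cases "cost X (set cs) = 0") auto
qed

lemma center_seqs_1: "center_seqs X 1 = (\<lambda>x. [x]) ` X"
  by (auto simp: center_seqs_def length_Suc_conv)

lemma center_seqs_Suc: "center_seqs X (Suc t) = (\<lambda>(cs, x). cs @ [x]) ` (center_seqs X t \<times> X)"
proof
  show "center_seqs X (Suc t) \<subseteq> (\<lambda>(cs, x). cs @ [x]) ` (center_seqs X t \<times> X)"
  proof
    fix ys assume "ys \<in> center_seqs X (Suc t)"
    then have ys: "set ys \<subseteq> X" "length ys = Suc t" by (auto simp: center_seqs_def)
    then have "ys \<noteq> []" by auto
    then have "ys = butlast ys @ [last ys]" "butlast ys \<in> center_seqs X t" "last ys \<in> X"
      using ys by (auto simp: center_seqs_def dest: in_set_butlastD)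
    then show "ys \<in> (\<lambda>(cs, x). cs @ [x]) ` (center_seqs X t \<times> X)" by force
  qed
qed (auto simp: center_seqs_def)

lemma kpp_expect_1: "kpp_expect X 1 f = (\<Sum>x\<in>X. f [x]) / real (card X)"
  unfolding kpp_expect_def center_seqs_1
  by (subst sum.reindex) (auto simp: inj_on_def kpp_prob_def sum_divide_distrib)

lemma kpp_expect_Suc:
  assumes "1 \<le> t"
  shows "kpp_expect X (Suc t) f
    = (\<Sum>cs\<in>center_seqs X t. kpp_prob X cs * (\<Sum>x\<in>X. d2_prob X cs x * f (cs @ [x])))"
proof -
  have inj: "inj_on (\<lambda>(cs, x). cs @ [x]) (center_seqs X t \<times> X)"
    by (auto simp: inj_on_def)
  have "kpp_expect X (Suc t) f = (\<Sum>(cs, x)\<in>center_seqs X t \<times> X. kpp_prob X (cs @ [x]) * f (cs @ [x]))"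
    unfolding kpp_expect_def center_seqs_Suc by (subst sum.reindex[OF inj]) (simp add: case_prod_beta')
  also have "\<dots> = (\<Sum>cs\<in>center_seqs X t. \<Sum>x\<in>X. kpp_prob X cs * (d2_prob X cs x * f (cs @ [x])))"
    unfolding sum.cartesian_product[symmetric] using assms
    by (intro sum.cong refl) (simp add: kpp_prob_snoc center_seqs_def)
  finally show ?thesis by (simp add: sum_distrib_left)
qed

lemma kpp_expect_mono:
  "(\<And>cs. cs \<in> center_seqs X t \<Longrightarrow> f cs \<le> g cs) \<Longrightarrow> kpp_expect X t f \<le> kpp_expect X t g"
  unfolding kpp_expect_def by (intro sum_mono mult_left_mono kpp_prob_nonneg) auto

lemma kpp_expect_add: "kpp_expect X t (\<lambda>cs. f cs + g cs) = kpp_expect X t f + kpp_expect X t g"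
  unfolding kpp_expect_def by (simp add: distrib_left sum.distrib)

lemma kpp_expect_sum: "kpp_expect X t (\<lambda>cs. \<Sum>i\<in>I. f i cs) = (\<Sum>i\<in>I. kpp_expect X t (f i))"
  unfolding kpp_expect_def by (simp add: sum_distrib_left sum.swap[of _ I])

lemma kpp_expect_cmult: "kpp_expect X t (\<lambda>cs. c * f cs) = c * kpp_expect X t f"
  unfolding kpp_expect_def by (simp add: sum_distrib_left mult.left_commute)

lemma kpp_expect_Suc_le:
  assumes "1 \<le> t"
    and "\<And>cs. cs \<in> center_seqs X t \<Longrightarrow> (\<Sum>x\<in>X. d2_prob X cs x * f (cs @ [x])) \<le> g cs"
  shows "kpp_expect X (Suc t) f \<le> kpp_expect X t g"
  unfolding kpp_expect_Suc[OF assms(1)] unfolding kpp_expect_def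
  by (intro sum_mono mult_left_mono kpp_prob_nonneg assms(2)) auto

section \<open>Covered clusters\<close>

lemma covered_insert: "covered Q (insert x C) \<longleftrightarrow> x \<in> Q \<or> covered Q C"
  unfolding covered_def by auto

locale kmeans_clustering =
  fixes X :: "'a::euclidean_space set" and P :: "nat \<Rightarrow> 'a set" and k :: nat
  assumes finite_X: "finite X" and k_pos: "1 \<le> k" and optimal: "optimal_clustering k X P"
begin

lemma cluster_nonempty: "i < k \<Longrightarrow> P i \<noteq> {}"
  using optimal by (simp add: optimal_clustering_def)

lemma clusters_disjoint: "i < k \<Longrightarrow> j < k \<Longrightarrow> i \<noteq> j \<Longrightarrow> P i \<inter> P j = {}"
  using optimal by (simp add: optimal_clustering_def)

lemma Union_clusters: "(\<Union>i<k. P i) = X"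
  using optimal by (simp add: optimal_clustering_def)

lemma sum_OPT1_clusters: "(\<Sum>i<k. OPT 1 (P i)) = OPT k X"
  using optimal by (simp add: optimal_clustering_def)

lemma cluster_subset: "i < k \<Longrightarrow> P i \<subseteq> X"
  using Union_clusters by blast

lemma finite_cluster: "i < k \<Longrightarrow> finite (P i)"
  using cluster_subset finite_X by (meson finite_subset)

lemma X_nonempty: "X \<noteq> {}"
  using cluster_nonempty[of 0] cluster_subset[of 0] k_pos by auto

lemma cluster_unique: "l < k \<Longrightarrow> l' < k \<Longrightarrow> x \<in> P l \<Longrightarrow> x \<in> P l' \<Longrightarrow> l = l'"
  using clusters_disjoint by blast

lemma sum_over_clusters: "(\<Sum>x\<in>X. f x) = (\<Sum>i<k. \<Sum>x\<in>P i. f x)"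
  unfolding Union_clusters[symmetric]
  by (rule sum.UNION_disjoint) (auto simp: finite_cluster clusters_disjoint)

lemma sum_split_cluster:
  "i < k \<Longrightarrow> (\<Sum>x\<in>X. f x) = (\<Sum>x\<in>P i. f x) + (\<Sum>x\<in>X - P i. f x)"
  using cluster_subset finite_X by (metis add.commute sum.subset_diff)

lemma OPT_nonneg: "0 \<le> OPT k X"
proof -
  have "0 \<le> (\<Sum>i<k. centroid_cost (P i))" by (intro sum_nonneg) (simp add: centroid_cost_nonneg)
  also have "\<dots> \<le> (\<Sum>i<k. OPT 1 (P i))"
    by (intro sum_mono centroid_cost_le_OPT1) (auto simp: finite_cluster cluster_nonempty)
  finally show ?thesis using sum_OPT1_clusters by simp
qed

definition cost_covered :: "'a set \<Rightarrow> real" where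
  "cost_covered C = (\<Sum>i<k. if covered (P i) C then cost (P i) C else 0)"

lemma cost_eq_cost_covered_plus_U: "cost X C = cost_covered C + U k P C"
  unfolding cost_def sum_over_clusters cost_covered_def U_def
  by (subst sum.distrib[symmetric]) (intro sum.cong refl, simp add: cost_def)

lemma cost_covered_nonneg: "finite C \<Longrightarrow> C \<noteq> {} \<Longrightarrow> 0 \<le> cost_covered C"
  unfolding cost_covered_def by (intro sum_nonneg) (auto intro: cost_nonneg)

lemma U_nonneg: "finite C \<Longrightarrow> C \<noteq> {} \<Longrightarrow> 0 \<le> U k P C"
  unfolding U_def by (intro sum_nonneg) (auto intro: cost_nonneg)

text \<open>A supermartingale under \<open>D\<^sup>2\<close> sampling that majorizes the contribution of cluster
  \<open>i\<close> to \<open>cost_covered\<close>.\<close>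

definition cluster_majorant :: "nat \<Rightarrow> 'a set \<Rightarrow> real" where
  "cluster_majorant i C = (if covered (P i) C then cost (P i) C else 5 * centroid_cost (P i))"

lemma cluster_majorant_nonneg: "finite C \<Longrightarrow> C \<noteq> {} \<Longrightarrow> 0 \<le> cluster_majorant i C"
  unfolding cluster_majorant_def by (auto intro: cost_nonneg simp: centroid_cost_nonneg)

lemma cost_covered_le_sum_majorant:
  "finite C \<Longrightarrow> C \<noteq> {} \<Longrightarrow> cost_covered C \<le> (\<Sum>i<k. cluster_majorant i C)"
  unfolding cost_covered_def cluster_majorant_def
  by (intro sum_mono) (auto intro: cost_nonneg simp: centroid_cost_nonneg)

lemma sum_cost_pt_mul_majorant_le:
  assumes C: "finite C" "C \<noteq> {}" and i: "i < k"
  shows "(\<Sum>x\<in>X. cost_pt x C * cluster_majorant i (insert x C)) \<le> cost X C * cluster_majorant i C"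
proof (cases "covered (P i) C")
  case True
  have "(\<Sum>x\<in>X. cost_pt x C * cluster_majorant i (insert x C)) \<le> (\<Sum>x\<in>X. cost_pt x C * cost (P i) C)"
    using True C by (intro sum_mono mult_left_mono cost_pt_nonneg)
      (auto simp: cluster_majorant_def covered_insert intro: cost_antimono)
  then show ?thesis using True by (simp add: cluster_majorant_def cost_def sum_distrib_right)
next
  case False
  define R where "R = centroid_cost (P i)"
  have "(\<Sum>x\<in>P i. cost_pt x C * cluster_majorant i (insert x C))
      = (\<Sum>x\<in>P i. cost_pt x C * cost (P i) (insert x C))"
    by (intro sum.cong) (auto simp: cluster_majorant_def covered_insert)
  also have "\<dots> \<le> 5 * R * cost (P i) C"
    unfolding R_def by (rule sum_cost_pt_mul_cost_insert_le[OF finite_cluster[OF i] cluster_nonempty[OF i] C])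
  finally have "(\<Sum>x\<in>P i. cost_pt x C * cluster_majorant i (insert x C)) \<le> 5 * R * cost (P i) C" .
  moreover have "(\<Sum>x\<in>X - P i. cost_pt x C * cluster_majorant i (insert x C))
      = 5 * R * (\<Sum>x\<in>X - P i. cost_pt x C)"
    using False by (simp add: cluster_majorant_def covered_insert R_def sum_distrib_left mult.commute)
  moreover have "cost X C = cost (P i) C + (\<Sum>x\<in>X - P i. cost_pt x C)"
    unfolding cost_def by (rule sum_split_cluster[OF i])
  ultimately show ?thesis
    using False sum_split_cluster[OF i, of "\<lambda>x. cost_pt x C * cluster_majorant i (insert x C)"]
    by (simp add: cluster_majorant_def R_def algebra_simps)
qed

lemma cluster_majorant_step:
  assumes "cs \<in> center_seqs X t" "1 \<le> t" "i < k"
  shows "(\<Sum>x\<in>X. d2_prob X cs x * cluster_majorant i (set (cs @ [x]))) \<le> cluster_majorant i (set cs)"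
proof -
  define C where "C = set cs"
  have C: "finite C" "C \<noteq> {}" using assms by (auto simp: C_def center_seqs_def)
  have "(\<Sum>x\<in>X. d2_prob X cs x * cluster_majorant i (set (cs @ [x])))
      = (\<Sum>x\<in>X. cost_pt x C * cluster_majorant i (insert x C)) / cost X C"
    unfolding d2_prob_def C_def by (simp add: sum_divide_distrib)
  also have "\<dots> \<le> cost X C * cluster_majorant i C / cost X C"
    using sum_cost_pt_mul_majorant_le[OF C assms(3)] cost_nonneg[OF C]
    by (intro divide_right_mono) auto
  also have "\<dots> \<le> cluster_majorant i C"
    using cluster_majorant_nonneg[OF C] by (cases "cost X C = 0") auto
  finally show ?thesis by (simp add: C_def)
qed

lemma kpp_expect_1_cluster_majorant:
  assumes i: "i < k"
  shows "kpp_expect X 1 (\<lambda>cs. cluster_majorant i (set cs)) \<le> 5 * centroid_cost (P i)"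
proof -
  define R n N where "R = centroid_cost (P i)" and "n = real (card (P i))" and "N = real (card X)"
  have R: "0 \<le> R" by (simp add: R_def centroid_cost_nonneg)
  have nN: "n \<le> N" unfolding n_def N_def using cluster_subset[OF i] finite_X by (simp add: card_mono)
  have N: "0 < N" using finite_X X_nonempty by (simp add: N_def card_gt_0_iff)
  have "(\<Sum>x\<in>P i. cluster_majorant i {x}) = (\<Sum>x\<in>P i. R + n * (norm (x - centroid (P i)))^2)"
    using sum_sq_dist_centroid[OF finite_cluster[OF i] cluster_nonempty[OF i]]
    by (intro sum.cong refl) (auto simp: cluster_majorant_def covered_def cost_def cost_pt_def
        R_def n_def norm_minus_commute)
  also have "\<dots> = 2 * n * R"
    by (simp add: sum.distrib n_def R_def centroid_cost_def norm_minus_commute flip: sum_distrib_left)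
  finally have inside: "(\<Sum>x\<in>P i. cluster_majorant i {x}) = 2 * n * R" .
  have "(\<Sum>x\<in>X - P i. cluster_majorant i {x}) = (\<Sum>x\<in>X - P i. 5 * R)"
    by (intro sum.cong) (auto simp: cluster_majorant_def covered_def R_def)
  also have "\<dots> = (N - n) * (5 * R)"
    using cluster_subset[OF i] finite_X finite_cluster[OF i]
    by (simp add: card_Diff_subset n_def N_def of_nat_diff card_mono)
  finally have outside: "(\<Sum>x\<in>X - P i. cluster_majorant i {x}) = (N - n) * (5 * R)" .
  have "kpp_expect X 1 (\<lambda>cs. cluster_majorant i (set cs)) = (2 * n * R + (N - n) * (5 * R)) / N"
    unfolding kpp_expect_1 by (simp add: sum_split_cluster[OF i] inside outside N_def)
  also have "\<dots> \<le> N * (5 * R) / N"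
    using R nN n_def by (intro divide_right_mono) (auto simp: algebra_simps mult_right_mono)
  finally show ?thesis using N by (simp add: R_def)
qed

lemma kpp_expect_cluster_majorant:
  assumes "1 \<le> t" "i < k"
  shows "kpp_expect X t (\<lambda>cs. cluster_majorant i (set cs)) \<le> 5 * centroid_cost (P i)"
  using assms(1)
proof (induction t rule: dec_induct)
  case base
  then show ?case using kpp_expect_1_cluster_majorant[OF assms(2)] by simp
next
  case (step t)
  have "kpp_expect X (Suc t) (\<lambda>cs. cluster_majorant i (set cs))
      \<le> kpp_expect X t (\<lambda>cs. cluster_majorant i (set cs))"
    using cluster_majorant_step[OF _ step(1) assms(2)] by (rule kpp_expect_Suc_le[OF step(1)])
  then show ?case using step by simp
qed

lemma kpp_expect_cost_covered:
  assumes "1 \<le> t"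
  shows "kpp_expect X t (\<lambda>cs. cost_covered (set cs)) \<le> 5 * OPT k X"
proof -
  have "kpp_expect X t (\<lambda>cs. cost_covered (set cs))
      \<le> kpp_expect X t (\<lambda>cs. \<Sum>i<k. cluster_majorant i (set cs))"
    using assms by (intro kpp_expect_mono cost_covered_le_sum_majorant) (auto simp: center_seqs_def)
  also have "\<dots> = (\<Sum>i<k. kpp_expect X t (\<lambda>cs. cluster_majorant i (set cs)))"
    by (rule kpp_expect_sum)
  also have "\<dots> \<le> (\<Sum>i<k. 5 * OPT 1 (P i))"
    using centroid_cost_le_OPT1[OF finite_cluster cluster_nonempty]
    by (intro sum_mono order.trans[OF kpp_expect_cluster_majorant[OF assms]]) auto
  also have "\<dots> = 5 * OPT k X" by (simp only: sum_distrib_left[symmetric] sum_OPT1_clusters)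
  finally show ?thesis .
qed

end

section \<open>The potential\<close>

lemma misses_snoc:
  "misses k P (cs @ [x])
    = misses k P cs + (if \<exists>l<k. x \<in> P l \<and> covered (P l) (set cs) then 1 else 0)"
proof -
  define n where "n = length cs"
  define R where "R ys j \<longleftrightarrow> (\<exists>i<j. \<exists>l<k. ys ! i \<in> P l \<and> ys ! j \<in> P l)" for ys :: "'a list" and j
  have e: "(cs @ [x]) ! i = cs ! i" if "i < n" for i
    using that by (simp add: nth_append n_def)
  have old: "R (cs @ [x]) j \<longleftrightarrow> R cs j" if "j < n" for j
  proof -
    have "\<forall>i<j. (cs @ [x]) ! i = cs ! i" using that e by simp
    then show ?thesis unfolding R_def e[OF that] by force
  qed
  have new: "R (cs @ [x]) n \<longleftrightarrow> (\<exists>l<k. x \<in> P l \<and> covered (P l) (set cs))"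
    unfolding R_def covered_def by (auto simp: e n_def in_set_conv_nth) (metis disjoint_iff nth_mem)
  have "{j. j < length (cs @ [x]) \<and> R (cs @ [x]) j}
      = {j. j < n \<and> R cs j} \<union> (if R (cs @ [x]) n then {n} else {})"
    using old by (auto simp: n_def less_Suc_eq)
  then show ?thesis unfolding misses_def R_def[symmetric] n_def[symmetric] using new
    by (auto simp: card_insert_if)
qed

lemma Kunc_conv: "Kunc k P C = card {i\<in>{..<k}. \<not> covered (P i) C}"
  unfolding Kunc_def by (rule arg_cong[where f = card]) auto

lemma U_conv: "U k P C = (\<Sum>i\<in>{i\<in>{..<k}. \<not> covered (P i) C}. cost (P i) C)"
  unfolding U_def by (subst sum.inter_filter) (auto intro: sum.cong)

lemma Kunc_antimono: "C \<subseteq> C' \<Longrightarrow> Kunc k P C' \<le> Kunc k P C"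
  unfolding Kunc_def by (intro card_mono) (auto simp: covered_def)

text \<open>If the \<open>c\<^sub>i\<close> sum to \<open>u\<close> over \<open>K \<ge> 2\<close> indices, Cauchy-Schwarz gives
  \<open>\<Sum>\<^sub>i c\<^sub>i (u - c\<^sub>i) \<le> u\<^sup>2 (K - 1) / K\<close>.\<close>

lemma sum_leave_one_out_le:
  fixes c :: "'b \<Rightarrow> real" and m u :: real
  assumes "finite I" "(\<Sum>i\<in>I. c i) = u" "0 \<le> m" "0 < card I"
  shows "(\<Sum>i\<in>I. c i * (if 2 \<le> card I then m * (u - c i) / (real (card I) - 1) else 0))
    \<le> m * u^2 / real (card I)"
proof (cases "2 \<le> card I")
  case False
  then show ?thesis using assms by simp
next
  case True
  define K where "K = real (card I)"
  have K: "1 < K" using True by (simp add: K_def)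
  have cs: "u^2 \<le> K * (\<Sum>i\<in>I. (c i)^2)"
    using sum_squared_le_sum_of_squares[of c I] assms by (simp add: K_def mult.commute)
  have "c i * (if 2 \<le> card I then m * (u - c i) / (real (card I) - 1) else 0)
      = (m / (K - 1)) * (u * c i - (c i)^2)" for i
    using True K by (simp add: K_def power2_eq_square field_simps)
  then have "(\<Sum>i\<in>I. c i * (if 2 \<le> card I then m * (u - c i) / (real (card I) - 1) else 0))
      = (m / (K - 1)) * (u * (\<Sum>i\<in>I. c i) - (\<Sum>i\<in>I. (c i)^2))"
    by (simp add: sum_subtractf flip: sum_divide_distrib sum_distrib_left)
  also have "\<dots> \<le> (m / (K - 1)) * (u * u - u^2 / K)"
    using cs K assms by (intro mult_left_mono) (auto simp: field_simps)
  also have "\<dots> = m * u^2 / K" using K by (simp add: field_simps power2_eq_square)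
  finally show ?thesis by (simp add: K_def)
qed

context kmeans_clustering
begin

lemma Kunc_insert_covered:
  assumes "l < k" "x \<in> P l" "covered (P l) C"
  shows "Kunc k P (insert x C) = Kunc k P C"
proof -
  have "x \<notin> P i" if "i < k" "\<not> covered (P i) C" for i
    using that assms cluster_unique[of i l x] by auto
  then have "{i\<in>{..<k}. \<not> covered (P i) (insert x C)} = {i\<in>{..<k}. \<not> covered (P i) C}"
    by (auto simp: covered_insert)
  then show ?thesis unfolding Kunc_conv by simp
qed

lemma Kunc_insert_uncovered:
  assumes "l < k" "x \<in> P l" "\<not> covered (P l) C"
  shows "Kunc k P (insert x C) = Kunc k P C - 1" "1 \<le> Kunc k P C"
proof -
  have "x \<notin> P i" if "i < k" "i \<noteq> l" for i
    using that assms cluster_unique[of i l x] by auto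
  then have eq: "{i\<in>{..<k}. \<not> covered (P i) (insert x C)} = {i\<in>{..<k}. \<not> covered (P i) C} - {l}"
    using assms by (auto simp: covered_insert)
  have l: "l \<in> {i\<in>{..<k}. \<not> covered (P i) C}" using assms by simp
  show "Kunc k P (insert x C) = Kunc k P C - 1" unfolding Kunc_conv eq using l by simp
  have "0 < card {i\<in>{..<k}. \<not> covered (P i) C}"
    using l by (subst card_gt_0_iff) auto
  then show "1 \<le> Kunc k P C" unfolding Kunc_conv by simp
qed

lemma U_insert_summand_le:
  assumes "finite C" "C \<noteq> {}"
  shows "(if covered (P i) (insert x C) then 0 else cost (P i) (insert x C))
    \<le> (if covered (P i) C then 0 else cost (P i) C)"
  using assms cost_nonneg[OF assms, of "P i"] cost_antimono[of "insert x C" C "P i"]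
  by (auto simp: covered_insert)

lemma U_insert_le: "finite C \<Longrightarrow> C \<noteq> {} \<Longrightarrow> U k P (insert x C) \<le> U k P C"
  unfolding U_def by (intro sum_mono U_insert_summand_le)

lemma U_insert_uncovered_le:
  assumes "finite C" "C \<noteq> {}" "l < k" "x \<in> P l" "\<not> covered (P l) C"
  shows "U k P (insert x C) \<le> U k P C - cost (P l) C"
proof -
  have "U k P (insert x C)
      \<le> (\<Sum>i<k. (if covered (P i) C then 0 else cost (P i) C) - (if i = l then cost (P l) C else 0))"
    unfolding U_def
  proof (intro sum_mono)
    fix i assume "i \<in> {..<k}"
    then show "(if covered (P i) (insert x C) then 0 else cost (P i) (insert x C))
        \<le> (if covered (P i) C then 0 else cost (P i) C) - (if i = l then cost (P l) C else 0)"
      using assms U_insert_summand_le[OF assms(1,2), of i x]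
      by (cases "i = l") (simp_all add: covered_insert)
  qed
  also have "\<dots> = U k P C - cost (P l) C" using assms(3) by (simp add: sum_subtractf U_def)
  finally show ?thesis .
qed

lemma card_covered_le:
  assumes "finite C"
  shows "card {i\<in>{..<k}. covered (P i) C} \<le> card C"
proof -
  define f where "f i = (SOME c. c \<in> C \<and> c \<in> P i)" for i
  have f: "f i \<in> C \<and> f i \<in> P i" if "covered (P i) C" for i
  proof -
    from that have "\<exists>c. c \<in> C \<and> c \<in> P i" by (auto simp: covered_def)
    then show ?thesis unfolding f_def by (rule someI_ex)
  qed
  have "inj_on f {i\<in>{..<k}. covered (P i) C}"
  proof (rule inj_onI)
    fix i j assume "i \<in> {i\<in>{..<k}. covered (P i) C}" "j \<in> {i\<in>{..<k}. covered (P i) C}" "f i = f j"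
    then show "i = j" using f[of i] f[of j] cluster_unique[of i j "f i"] by auto
  qed
  moreover have "f ` {i\<in>{..<k}. covered (P i) C} \<subseteq> C" using f by blast
  ultimately show ?thesis using assms by (rule card_inj_on_le)
qed

lemma Kunc_ge:
  assumes "cs \<in> center_seqs X t"
  shows "k - t \<le> Kunc k P (set cs)"
proof -
  define A B where "A = {i\<in>{..<k}. covered (P i) (set cs)}" and "B = {i\<in>{..<k}. \<not> covered (P i) (set cs)}"
  have "{..<k} = A \<union> B" "A \<inter> B = {}" by (auto simp: A_def B_def)
  then have "k = card A + card B"
    by (metis card_Un_disjoint card_lessThan finite_Un finite_lessThan)
  moreover have "card A \<le> t"
    using card_covered_le[of "set cs"] card_length[of cs] assms by (simp add: A_def center_seqs_def)
  ultimately show ?thesis by (simp add: Kunc_conv B_def)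
qed

definition potential :: "'a list \<Rightarrow> real" where
  "potential cs = Psi k X P cs (length cs)"

lemma potential_eq:
  "potential cs = (if 0 < Kunc k P (set cs)
     then real (misses k P cs) * U k P (set cs) / real (Kunc k P (set cs)) else 0)"
  by (simp add: potential_def Psi_def Let_def)

lemma potential_snoc_covered:
  assumes C: "finite (set cs)" "set cs \<noteq> {}" and l: "l < k" "x \<in> P l" "covered (P l) (set cs)"
    and K: "0 < Kunc k P (set cs)"
  shows "potential (cs @ [x]) \<le> (real (misses k P cs) + 1) * U k P (set cs) / real (Kunc k P (set cs))"
proof -
  have "misses k P (cs @ [x]) = misses k P cs + 1" using misses_snoc[of k P cs x] l by auto
  then have "potential (cs @ [x])
      = (real (misses k P cs) + 1) * U k P (insert x (set cs)) / real (Kunc k P (set cs))"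
    unfolding potential_eq using K by (simp add: Kunc_insert_covered[OF l])
  also have "\<dots> \<le> (real (misses k P cs) + 1) * U k P (set cs) / real (Kunc k P (set cs))"
    using U_insert_le[OF C] by (intro divide_right_mono mult_left_mono) auto
  finally show ?thesis .
qed

lemma potential_snoc_uncovered:
  assumes C: "finite (set cs)" "set cs \<noteq> {}" and l: "l < k" "x \<in> P l" "\<not> covered (P l) (set cs)"
  shows "potential (cs @ [x]) \<le> (if 2 \<le> Kunc k P (set cs)
    then real (misses k P cs) * (U k P (set cs) - cost (P l) (set cs)) / (real (Kunc k P (set cs)) - 1)
    else 0)"
proof -
  have "\<not> (\<exists>l'<k. x \<in> P l' \<and> covered (P l') (set cs))"
    using l cluster_unique[of _ l x] by blast
  then have M: "misses k P (cs @ [x]) = misses k P cs" using misses_snoc[of k P cs x] by simp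
  note K = Kunc_insert_uncovered[OF l]
  show ?thesis
  proof (cases "2 \<le> Kunc k P (set cs)")
    case True
    have "potential (cs @ [x])
        = real (misses k P cs) * U k P (insert x (set cs)) / (real (Kunc k P (set cs)) - 1)"
      unfolding potential_eq using True K by (simp add: M of_nat_diff)
    also have "\<dots> \<le> real (misses k P cs) * (U k P (set cs) - cost (P l) (set cs))
        / (real (Kunc k P (set cs)) - 1)"
      using U_insert_uncovered_le[OF C l] True by (intro divide_right_mono mult_left_mono) auto
    finally show ?thesis using True by simp
  next
    case False
    then show ?thesis using K by (simp add: potential_eq)
  qed
qed

lemma sum_cost_pt_mul_potential_le:
  assumes C: "finite (set cs)" "set cs \<noteq> {}" and K: "0 < Kunc k P (set cs)"
  defines "M \<equiv> real (misses k P cs)" and "u \<equiv> U k P (set cs)" and "Kr \<equiv> real (Kunc k P (set cs))"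
  shows "(\<Sum>x\<in>X. cost_pt x (set cs) * potential (cs @ [x]))
    \<le> cost_covered (set cs) * ((M + 1) * u / Kr) + M * u^2 / Kr"
proof -
  define C where "C = set cs"
  define g where "g i = (if 2 \<le> Kunc k P C then M * (u - cost (P i) C) / (Kr - 1) else 0)" for i
  define B where "B i = (if covered (P i) C then cost (P i) C * ((M + 1) * u / Kr) else cost (P i) C * g i)"
    for i
  have D: "0 \<le> cost_pt x C" for x using C by (simp add: C_def cost_pt_nonneg)
  have "(\<Sum>x\<in>P i. cost_pt x C * potential (cs @ [x])) \<le> B i" if i: "i < k" for i
  proof (cases "covered (P i) C")
    case True
    have "(\<Sum>x\<in>P i. cost_pt x C * potential (cs @ [x])) \<le> (\<Sum>x\<in>P i. cost_pt x C * ((M + 1) * u / Kr))"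
      using potential_snoc_covered[OF C i] True K
      by (intro sum_mono mult_left_mono D) (auto simp: C_def M_def u_def Kr_def)
    then show ?thesis using True by (simp add: B_def cost_def sum_distrib_right sum_divide_distrib)
  next
    case False
    have "(\<Sum>x\<in>P i. cost_pt x C * potential (cs @ [x])) \<le> (\<Sum>x\<in>P i. cost_pt x C * g i)"
      using potential_snoc_uncovered[OF C i] False
      by (intro sum_mono mult_left_mono D) (auto simp: C_def M_def u_def Kr_def g_def)
    then show ?thesis using False by (simp add: B_def cost_def sum_distrib_right)
  qed
  then have "(\<Sum>x\<in>X. cost_pt x C * potential (cs @ [x])) \<le> (\<Sum>i<k. B i)"
    unfolding sum_over_clusters by (intro sum_mono) auto
  also have "\<dots> = (\<Sum>i<k. (if covered (P i) C then cost (P i) C else 0) * ((M + 1) * u / Kr))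
      + (\<Sum>i<k. if \<not> covered (P i) C then cost (P i) C * g i else 0)"
    unfolding sum.distrib[symmetric] by (intro sum.cong refl) (simp add: B_def)
  also have "\<dots> = cost_covered C * ((M + 1) * u / Kr)
      + (\<Sum>i\<in>{i\<in>{..<k}. \<not> covered (P i) C}. cost (P i) C * g i)"
    using sum.inter_filter[of "{..<k}" "\<lambda>i. cost (P i) C * g i" "\<lambda>i. \<not> covered (P i) C"]
    by (simp add: cost_covered_def sum_distrib_right sum_divide_distrib)
  also have "(\<Sum>i\<in>{i\<in>{..<k}. \<not> covered (P i) C}. cost (P i) C * g i) \<le> M * u^2 / Kr"
    unfolding g_def Kr_def Kunc_conv C_def
    by (rule sum_leave_one_out_le) (use K in \<open>auto simp: M_def u_def U_conv Kunc_conv C_def\<close>)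
  finally show ?thesis by (simp add: C_def)
qed

lemma potential_step:
  assumes cs: "cs \<in> center_seqs X t" "1 \<le> t" and K: "0 < Kunc k P (set cs)"
  shows "(\<Sum>x\<in>X. d2_prob X cs x * potential (cs @ [x]))
    \<le> potential cs + cost_covered (set cs) / real (Kunc k P (set cs))"
proof -
  define C M u Kr H T where "C = set cs" and "M = real (misses k P cs)" and "u = U k P (set cs)"
    and "Kr = real (Kunc k P (set cs))" and "H = cost_covered (set cs)" and "T = cost X (set cs)"
  have C: "finite C" "C \<noteq> {}" using cs by (auto simp: C_def center_seqs_def)
  have pos: "0 < Kr" "0 \<le> M" "0 \<le> u" "0 \<le> H"
    using K U_nonneg[OF C] cost_covered_nonneg[OF C] by (simp_all add: Kr_def M_def u_def H_def C_def)
  have T: "T = H + u" by (simp add: T_def H_def u_def cost_eq_cost_covered_plus_U)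
  have potential: "potential cs = M * u / Kr" using K by (simp add: potential_eq M_def u_def Kr_def)
  have "(\<Sum>x\<in>X. d2_prob X cs x * potential (cs @ [x])) = (\<Sum>x\<in>X. cost_pt x C * potential (cs @ [x])) / T"
    unfolding d2_prob_def T_def C_def by (simp add: sum_divide_distrib)
  also have "\<dots> \<le> (H * ((M + 1) * u / Kr) + M * u^2 / Kr) / T"
    using sum_cost_pt_mul_potential_le[OF C[unfolded C_def] K] T pos
    by (intro divide_right_mono) (auto simp: C_def M_def u_def Kr_def H_def)
  also have "\<dots> \<le> M * u / Kr + H / Kr"
  proof (cases "T = 0")
    case False
    then have T_pos: "0 < T" using T pos by simp
    have "H * ((M + 1) * u / Kr) + M * u^2 / Kr = (T * (M * u) + H * u) / Kr"
      using T pos by (simp add: field_simps power2_eq_square)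
    then have "(H * ((M + 1) * u / Kr) + M * u^2 / Kr) / T = M * u / Kr + (H * u / T) / Kr"
      using T_pos pos by (simp add: field_simps)
    moreover have "H * u / T \<le> H" using T T_pos pos by (simp add: divide_le_eq mult_left_mono)
    then have "(H * u / T) / Kr \<le> H / Kr" using pos by (intro divide_right_mono) auto
    ultimately show ?thesis by linarith
  qed (use pos in simp)
  finally show ?thesis by (simp add: potential M_def u_def Kr_def H_def)
qed

end

section \<open>Stopping and the harmonic bound\<close>

definition capped_harmonic :: "nat \<Rightarrow> nat \<Rightarrow> real" where
  "capped_harmonic m a = (\<Sum>j\<in>{1..m}. 1 / real (max j a))"

lemma one_minus_inverse_le_ln: "0 < (y::real) \<Longrightarrow> 1 - 1 / y \<le> ln y"
  using ln_le_minus_one[of "1 / y"] by (simp add: ln_div)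

lemma capped_harmonic_below: "m < a \<Longrightarrow> capped_harmonic m a = real m / real a"
  unfolding capped_harmonic_def by (simp add: max_def)

lemma capped_harmonic_le_ln:
  assumes "1 \<le> a" "a \<le> m"
  shows "capped_harmonic m a \<le> 1 + ln (real m / real a)"
  using assms(2)
proof (induction m rule: dec_induct)
  case base
  have "capped_harmonic a a = (\<Sum>j\<in>{1..a}. 1 / real a)"
    unfolding capped_harmonic_def by (intro sum.cong refl) (simp add: max_def)
  then show ?case using assms by simp
next
  case (step m)
  have m: "0 < real m" using step assms by simp
  have "1 / real (Suc m) = 1 - 1 / (real (Suc m) / real m)" using m by (simp add: field_simps)
  also have "\<dots> \<le> ln (real (Suc m) / real m)" using m by (intro one_minus_inverse_le_ln) simp
  also have "\<dots> = ln (real (Suc m) / real a) - ln (real m / real a)" using m assms by (simp add: ln_div)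
  finally show ?case using step by (simp add: capped_harmonic_def max_def)
qed

lemma capped_harmonic_bound:
  assumes "1 \<le> \<kappa>" "\<kappa> \<le> k"
  shows "capped_harmonic (k - 1) (\<kappa> + 1) \<le> 1 + ln (real k / (real \<kappa> + 1))"
proof (cases "\<kappa> + 1 \<le> k - 1")
  case True
  have "capped_harmonic (k - 1) (\<kappa> + 1) \<le> 1 + ln (real (k - 1) / real (\<kappa> + 1))"
    using True by (intro capped_harmonic_le_ln) auto
  also have "\<dots> \<le> 1 + ln (real k / (real \<kappa> + 1))"
    using True by (simp add: divide_right_mono add.commute)
  finally show ?thesis .
next
  case False
  have k: "0 < real k" "real k \<le> real \<kappa> + 1" "real (k - 1) = real k - 1" using False assms by auto
  have "k - 1 < \<kappa> + 1" using False by simp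
  then have "capped_harmonic (k - 1) (\<kappa> + 1) = (real k - 1) / (real \<kappa> + 1)"
    using k by (simp add: capped_harmonic_below add.commute)
  also have "\<dots> \<le> (real k - 1) / real k" using k assms by (intro divide_left_mono) auto
  also have "\<dots> \<le> 1 + (1 - 1 / (real k / (real \<kappa> + 1)))"
    using k assms by (simp add: field_simps)
  also have "\<dots> \<le> 1 + ln (real k / (real \<kappa> + 1))"
    using one_minus_inverse_le_ln[of "real k / (real \<kappa> + 1)"] k by simp
  finally show ?thesis .
qed

lemma Psi_append:
  assumes "j \<le> length cs"
  shows "Psi k X P (cs @ ys) j = Psi k X P cs j"
proof -
  have "take j (cs @ ys) = take j cs" using assms by simp
  then show ?thesis by (simp only: Psi_def)
qed

locale kmeanspp_stopping = kmeans_clustering +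
  fixes \<kappa> :: nat
begin

definition stop_time :: "nat \<Rightarrow> 'a list \<Rightarrow> nat" where
  "stop_time t cs = (if Kunc k P (set (take t cs)) \<le> \<kappa>
      then (LEAST j. 1 \<le> j \<and> j \<le> t \<and> Kunc k P (set (take j cs)) \<le> \<kappa>) else t)"

definition stopped_potential :: "nat \<Rightarrow> 'a list \<Rightarrow> real" where
  "stopped_potential t cs = Psi k X P cs (stop_time t cs)"

lemma tau_eq_stop_time: "tau k P \<kappa> cs = stop_time k cs"
  by (simp add: tau_def stop_time_def)

lemma stop_time_bounds:
  assumes "1 \<le> t"
  shows "1 \<le> stop_time t cs \<and> stop_time t cs \<le> t"
proof (cases "Kunc k P (set (take t cs)) \<le> \<kappa>")
  case True
  then have "1 \<le> t \<and> t \<le> t \<and> Kunc k P (set (take t cs)) \<le> \<kappa>" using assms by simp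
  from LeastI[of "\<lambda>j. 1 \<le> j \<and> j \<le> t \<and> Kunc k P (set (take j cs)) \<le> \<kappa>", OF this]
  show ?thesis using True by (simp add: stop_time_def)
qed (use assms in \<open>simp add: stop_time_def\<close>)

lemma stopped_potential_nonneg:
  assumes "cs \<in> center_seqs X t" "1 \<le> t"
  shows "0 \<le> stopped_potential t cs"
proof -
  have "set (take (stop_time t cs) cs) \<noteq> {}"
    using stop_time_bounds[OF assms(2), of cs] assms by (intro set_take_nonempty) (auto simp: center_seqs_def)
  then show ?thesis unfolding stopped_potential_def Psi_def Let_def
    by (auto intro!: divide_nonneg_nonneg mult_nonneg_nonneg U_nonneg)
qed

lemma stop_time_snoc_stopped:
  assumes "length cs = t" "1 \<le> t" "Kunc k P (set cs) \<le> \<kappa>"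
  shows "stop_time (Suc t) (cs @ [x]) = stop_time t cs"
proof -
  define Q where "Q j \<longleftrightarrow> 1 \<le> j \<and> j \<le> t \<and> Kunc k P (set (take j cs)) \<le> \<kappa>" for j
  define Q' where "Q' j \<longleftrightarrow> 1 \<le> j \<and> j \<le> Suc t \<and> Kunc k P (set (take j (cs @ [x]))) \<le> \<kappa>" for j
  have "Q t" using assms by (simp add: Q_def)
  then have Q_Least: "Q (LEAST j. Q j)" by (rule LeastI)
  have Q'_iff: "Q' j \<longleftrightarrow> Q j" if "j \<le> t" for j using that assms by (simp add: Q_def Q'_def)
  have "(LEAST j. Q' j) = (LEAST j. Q j)"
  proof (rule Least_equality)
    show "Q' (LEAST j. Q j)" using Q_Least Q'_iff by (simp add: Q_def)
    show "(LEAST j. Q j) \<le> y" if "Q' y" for y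
      using that Q_Least Q'_iff[of y] by (cases "y \<le> t") (auto simp: Q_def intro: Least_le)
  qed
  moreover have "Kunc k P (set (take (Suc t) (cs @ [x]))) \<le> \<kappa>"
    using assms order.trans[OF Kunc_antimono[OF subset_insertI] assms(3)] by simp
  ultimately show ?thesis using assms by (simp add: stop_time_def Q_def Q'_def)
qed

lemma stop_time_running:
  assumes "length cs = t" "\<not> Kunc k P (set cs) \<le> \<kappa>"
  shows "stop_time t cs = t" "stop_time (Suc t) (cs @ [x]) = Suc t"
proof -
  show "stop_time t cs = t" using assms by (simp add: stop_time_def)
  have "(LEAST j. 1 \<le> j \<and> j \<le> Suc t \<and> Kunc k P (set (take j (cs @ [x]))) \<le> \<kappa>) = Suc t"
    if "Kunc k P (set (take (Suc t) (cs @ [x]))) \<le> \<kappa>"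
  proof (rule Least_equality)
    show "1 \<le> Suc t \<and> Suc t \<le> Suc t \<and> Kunc k P (set (take (Suc t) (cs @ [x]))) \<le> \<kappa>" using that by simp
    show "Suc t \<le> j" if "1 \<le> j \<and> j \<le> Suc t \<and> Kunc k P (set (take j (cs @ [x]))) \<le> \<kappa>" for j
    proof (rule ccontr)
      assume "\<not> Suc t \<le> j"
      then have "Kunc k P (set cs) \<le> Kunc k P (set (take j cs))"
        by (intro Kunc_antimono set_take_subset)
      then show False using that assms \<open>\<not> Suc t \<le> j\<close> by simp
    qed
  qed
  then show "stop_time (Suc t) (cs @ [x]) = Suc t" by (simp add: stop_time_def)
qed

lemma stopped_potential_step:
  assumes cs: "cs \<in> center_seqs X t" "1 \<le> t"
  shows "(\<Sum>x\<in>X. d2_prob X cs x * stopped_potential (Suc t) (cs @ [x]))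
    \<le> stopped_potential t cs + cost_covered (set cs) / real (max (k - t) (\<kappa> + 1))"
proof -
  have len: "length cs = t" and C: "finite (set cs)" "set cs \<noteq> {}"
    using cs by (auto simp: center_seqs_def)
  have H: "0 \<le> cost_covered (set cs)" using cost_covered_nonneg[OF C] .
  show ?thesis
  proof (cases "Kunc k P (set cs) \<le> \<kappa>")
    case True
    have "stopped_potential (Suc t) (cs @ [x]) = stopped_potential t cs" for x
      using stop_time_snoc_stopped[OF len cs(2) True] len stop_time_bounds[OF cs(2), of cs]
      by (simp add: stopped_potential_def Psi_append)
    then have "(\<Sum>x\<in>X. d2_prob X cs x * stopped_potential (Suc t) (cs @ [x]))
        = (\<Sum>x\<in>X. d2_prob X cs x) * stopped_potential t cs"
      by (simp add: sum_distrib_right)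
    also have "\<dots> \<le> 1 * stopped_potential t cs"
      using sum_d2_prob_le_1 stopped_potential_nonneg[OF cs] by (intro mult_right_mono) auto
    finally show ?thesis using H by (simp add: add_increasing2)
  next
    case False
    then have K: "0 < Kunc k P (set cs)" by simp
    have "stopped_potential t cs = potential cs" "stopped_potential (Suc t) (cs @ [x]) = potential (cs @ [x])"
      for x using stop_time_running[OF len False] len by (simp_all add: stopped_potential_def potential_def)
    moreover have "cost_covered (set cs) / real (Kunc k P (set cs))
        \<le> cost_covered (set cs) / real (max (k - t) (\<kappa> + 1))"
      using False Kunc_ge[OF cs(1)] H by (intro divide_left_mono) auto
    ultimately show ?thesis using potential_step[OF cs K] by simp
  qed
qed

lemma stopped_potential_1: "stopped_potential 1 cs = 0"
proof -
  have "length (take (stop_time 1 cs) cs) \<le> 1"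
    using stop_time_bounds[of 1 cs] by (simp add: min.coboundedI2)
  then have "misses k P (take (stop_time 1 cs) cs) = 0" by (auto simp: misses_def card_eq_0_iff)
  then show ?thesis by (simp add: stopped_potential_def Psi_def Let_def)
qed

lemma kpp_expect_stopped_potential:
  assumes "1 \<le> t"
  shows "kpp_expect X t (stopped_potential t)
    \<le> 5 * OPT k X * (\<Sum>s\<in>{1..<t}. 1 / real (max (k - s) (\<kappa> + 1)))"
  using assms
proof (induction t rule: dec_induct)
  case base
  have "kpp_expect X 1 (stopped_potential 1) = 0"
    unfolding kpp_expect_def stopped_potential_1 by simp
  then show ?case using OPT_nonneg by simp
next
  case (step t)
  define w where "w = 1 / real (max (k - t) (\<kappa> + 1))"
  have "kpp_expect X (Suc t) (stopped_potential (Suc t))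
      \<le> kpp_expect X t (\<lambda>cs. stopped_potential t cs + w * cost_covered (set cs))"
    using stopped_potential_step[OF _ step(1)] by (intro kpp_expect_Suc_le[OF step(1)]) (simp add: w_def)
  also have "\<dots> = kpp_expect X t (stopped_potential t) + w * kpp_expect X t (\<lambda>cs. cost_covered (set cs))"
    by (simp only: kpp_expect_add kpp_expect_cmult)
  also have "\<dots> \<le> 5 * OPT k X * (\<Sum>s\<in>{1..<t}. 1 / real (max (k - s) (\<kappa> + 1))) + w * (5 * OPT k X)"
    using step.IH kpp_expect_cost_covered[OF step(1)] by (intro add_mono mult_left_mono) (auto simp: w_def)
  also have "\<dots> = 5 * OPT k X * (\<Sum>s\<in>{1..<Suc t}. 1 / real (max (k - s) (\<kappa> + 1)))"
    using step(1) by (simp add: w_def algebra_simps)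
  finally show ?case .
qed

lemma kpp_expect_Psi_tau:
  assumes "1 \<le> \<kappa>" "\<kappa> \<le> k"
  shows "kpp_expect X k (\<lambda>cs. Psi k X P cs (tau k P \<kappa> cs))
    \<le> 5 * (1 + ln (real k / (real \<kappa> + 1))) * OPT k X"
proof -
  have "(\<Sum>s\<in>{1..<k}. 1 / real (max (k - s) (\<kappa> + 1))) = capped_harmonic (k - 1) (\<kappa> + 1)"
    unfolding capped_harmonic_def by (rule sum.reindex_bij_witness[of _ "\<lambda>j. k - j" "\<lambda>s. k - s"]) auto
  moreover have "(\<lambda>cs. Psi k X P cs (tau k P \<kappa> cs)) = stopped_potential k"
    by (simp add: fun_eq_iff stopped_potential_def tau_eq_stop_time)
  ultimately have "kpp_expect X k (\<lambda>cs. Psi k X P cs (tau k P \<kappa> cs))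
      \<le> 5 * OPT k X * capped_harmonic (k - 1) (\<kappa> + 1)"
    using kpp_expect_stopped_potential[OF k_pos] by simp
  also have "\<dots> \<le> 5 * OPT k X * (1 + ln (real k / (real \<kappa> + 1)))"
    using capped_harmonic_bound[OF assms] OPT_nonneg by (intro mult_left_mono) auto
  finally show ?thesis by (simp add: algebra_simps)
qed

end

theorem mainTheorem8:
  fixes X :: "'a::euclidean_space set" and P :: "nat \<Rightarrow> 'a set" and k \<kappa> :: nat
  assumes "finite X" and "1 \<le> k" and "optimal_clustering k X P"
    and "1 \<le> \<kappa>" and "\<kappa> \<le> k"
  shows "(\<Sum>cs\<in>{cs. set cs \<subseteq> X \<and> length cs = k}.
            kpp_prob X cs * Psi k X P cs (tau k P \<kappa> cs))
         \<le> 5 * (1 + ln (real k / (real \<kappa> + 1))) * OPT k X"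
proof -
  interpret kmeanspp_stopping X P k \<kappa>
    using assms by unfold_locales
  show ?thesis
    using kpp_expect_Psi_tau[OF assms(4,5)] by (simp add: kpp_expect_def center_seqs_def)
qed

end
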